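(* Define $f:\mathbb{R}^2\to\mathbb{R}$ by $f(\mathbf x)=\sqrt{\log\|\mathbf x\|}$ if $\|\mathbf x\|\ge1$ and $f(\mathbf x)=0$ if $\|\mathbf x\|<1$. Then for all $\mathbf x,\mathbf y\in\mathbb{R}^2$ with $\mathbf x\ne\mathbf 0$, $$f(\mathbf x+\mathbf y)-f(\mathbf x)\le1+\frac{\|\mathbf y\|}{\|\mathbf x\|}.$$ Moreover, for every $\varepsilon\in(0,1)$ there exist constants $r,C>0$ depending on $\varepsilon$ such that for all $\mathbf x$ with $\|\mathbf x\|\ge r$ and all $\mathbf y$ with $\|\mathbf y\|\le\|\mathbf x\|^{1-\varepsilon}$, $$f(\mathbf x+\mathbf y)-f(\mathbf x)\le\frac{1}{2\sqrt{\log\|\mathbf x\|}}\Big(\frac{\mathbf x\cdot\mathbf y}{\|\mathbf x\|^2}+\frac{\|\mathbf y\|^2}{2\|\mathbf x\|^2}-\frac{(\mathbf x\cdot\mathbf y)^2}{\|\mathbf x\|^4}+\frac{C\|\mathbf y\|^2}{\|\mathbf x\|^{2+\varepsilon}}\Big)-\frac{1}{8\log^{3/2}\|\mathbf x\|}\frac{(\mathbf x\cdot\mathbf y)^2}{\|\mathbf x\|^4}+\frac{C\|\mathbf y\|^2}{\|\mathbf x\|^{2+\varepsilon}\log^{3/2}\|\mathbf x\|}.$$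
   Context: $\|\cdot\|$ is the Euclidean norm and $\mathbf x\cdot\mathbf y$ the standard scalar product. *)

theory Defs
  imports "HOL-Analysis.Analysis"
begin

definition flog :: "real^2 \<Rightarrow> real" where
  "flog x = (if norm x \<ge> 1 then sqrt (ln (norm x)) else 0)"

end

theory Submission
  imports Defs
begin

(*
  Since ln 1 = 0, f(x) = sqrt (ln (max 1 |x|)). The global bound follows from
  sqrt A - sqrt B <= sqrt (A - B) <= 1 + (A - B) together with the fact that ln is
  (1/m)-Lipschitz on [m, oo), where m = max 1 |x| >= |x|.

  For the expansion put u = x.y/|x|^2, q = |y|^2/|x|^2 and t = |x|^(-eps). Then
  |x+y|^2 = |x|^2 (1 + 2u + q), so f(x+y) = sqrt (a^2 + ln (1 + 2u + q)/2) with a = f(x);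
  moreover u^2 <= q by Cauchy-Schwarz and q <= t^2 by the hypothesis on |y|. Expanding
  ln (1 + s) and sqrt (a^2 + d) to third order, every error term is O(q t) once t <= 1/8
  and a >= 1, i.e. for |x| >= max (exp 1) (8^(1/eps)); the constant C = 10 suffices.
*)

lemma ln_one_plus_le_cubic:
  fixes s :: real
  assumes "s > -1"
  shows "ln (1 + s) \<le> s - s^2/2 + s^3/3"
proof -
  define g where "g = (\<lambda>z::real. z - z^2/2 + z^3/3 - ln (1 + z))"
  have g_deriv: "(g has_real_derivative z^3 / (1 + z)) (at z)" if "z > -1" for z
  proof -
    have "(g has_real_derivative (1 - z + z^2 - 1/(1+z))) (at z)"
      unfolding g_def using that
      by (auto intro!: derivative_eq_intros simp: power2_eq_square field_simps)
    moreover have "1 - z + z^2 - 1/(1+z) = z^3/(1+z)"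
      using that by (simp add: field_simps power2_eq_square power3_eq_cube)
    ultimately show ?thesis by simp
  qed
  have g_cont: "continuous_on {a..b} g" if "a > -1" for a b
    using g_deriv that
    by (intro continuous_at_imp_continuous_on ballI DERIV_isCont) (auto intro: less_le_trans)
  have "g 0 \<le> g s"
  proof (cases "s \<ge> 0")
    case True
    show ?thesis
    proof (rule DERIV_nonneg_imp_increasing_open[OF True _ g_cont])
      fix z :: real assume "0 < z" "z < s"
      then show "\<exists>y. (g has_real_derivative y) (at z) \<and> 0 \<le> y"
        using g_deriv[of z] by auto
    qed simp
  next
    case False
    show ?thesis
    proof (rule DERIV_nonpos_imp_decreasing_open[of s 0 g, OF _ _ g_cont[OF assms]])
      fix z :: real assume z: "s < z" "z < 0"
      then have "z^3 / (1 + z) \<le> 0"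
        using assms by (intro divide_nonpos_pos) auto
      then show "\<exists>y. (g has_real_derivative y) (at z) \<and> y \<le> 0"
        using g_deriv[of z] z assms by auto
    qed (use False in auto)
  qed
  then show ?thesis by (simp add: g_def)
qed

lemma sqrt_square_add_le:
  fixes a d :: real
  assumes a: "a \<ge> 1" and "a^2 + d \<ge> 0"
  shows "sqrt (a^2 + d) - a \<le> d/(2*a) - d^2/(8*a^3) + 3*\<bar>d\<bar>^3/(8*a^3)"
proof -
  define b where "b = sqrt (a^2 + d)"
  have b: "b \<ge> 0" "b^2 = a^2 + d" using assms by (simp_all add: b_def)
  then have d: "d = (b - a) * (a + b)" by (simp add: algebra_simps power2_eq_square)
  have ab: "a + b \<ge> 1" "a > 0" using a b by auto
  \<comment> \<open>exact remainder, from d = (b - a)(a + b)\<close>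
  have "b - a - d/(2*a) + d^2/(8*a^3) = d^3*(b + 3*a)/(8*a^3*(a + b)^3)"
    using ab unfolding d by (simp add: divide_simps) algebra
  also have "\<dots> \<le> \<bar>d\<bar>^3 * (3*(a + b)) / (8*a^3*(a + b)^3)"
  proof (rule divide_right_mono)
    have "d^3*(b + 3*a) \<le> \<bar>d\<bar>^3 * (b + 3*a)"
      using a b by (intro mult_right_mono) (auto simp flip: power_abs)
    also have "\<dots> \<le> \<bar>d\<bar>^3 * (3*(a + b))" using a b by (intro mult_left_mono) auto
    finally show "d^3*(b + 3*a) \<le> \<bar>d\<bar>^3 * (3*(a + b))" .
  qed (use ab in simp)
  also have "\<dots> = 3*\<bar>d\<bar>^3 / (8*a^3*(a + b)^2)" using ab by (simp add: divide_simps) algebra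
  also have "\<dots> \<le> 3*\<bar>d\<bar>^3 / (8*a^3)"
    using ab by (intro divide_left_mono) (auto simp: one_le_power)
  finally show ?thesis unfolding b_def by linarith
qed

lemma sqrt_diff_le_sqrt:
  fixes a b c :: real
  assumes "0 \<le> b" "0 \<le> c" "a \<le> b + c"
  shows "sqrt a - sqrt b \<le> sqrt c"
  using real_sqrt_le_mono[OF assms(3)] sqrt_add_le_add_sqrt[OF assms(1,2)] by linarith

lemma flog_eq_sqrt_ln_max: "flog x = sqrt (ln (max 1 (norm x)))"
  unfolding flog_def by (simp add: max_def)

lemma flog_add_sub_le:
  fixes x y :: "real^2"
  assumes "x \<noteq> 0"
  shows "flog (x + y) - flog x \<le> 1 + norm y / norm x"
proof -
  define m where "m = max 1 (norm x)"
  define M where "M = max 1 (norm (x + y))"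
  define c where "c = norm y / norm x"
  have x: "0 < norm x" "norm x \<le> m" "1 \<le> m" using assms by (simp_all add: m_def)
  have "0 \<le> c" by (simp add: c_def)
  have "norm (x + y) \<le> m + norm y" using norm_triangle_ineq[of x y] x by linarith
  moreover have "1 \<le> m + norm y" using x norm_ge_zero[of y] by linarith
  ultimately have "M \<le> m + norm y" by (simp add: M_def)
  have "ln M - ln m = ln (M/m)" using x by (simp add: M_def ln_div)
  also have "\<dots> \<le> M/m - 1" using x by (intro ln_le_minus_one) (simp add: M_def)
  also have "\<dots> = (M - m)/m" using x by (simp add: field_simps)
  also have "\<dots> \<le> norm y / m" using \<open>M \<le> m + norm y\<close> x by (intro divide_right_mono) auto
  also have "\<dots> \<le> c" unfolding c_def using x by (intro divide_left_mono) auto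
  finally have "sqrt (ln M) - sqrt (ln m) \<le> sqrt c"
    using x \<open>0 \<le> c\<close> by (intro sqrt_diff_le_sqrt) (simp_all add: m_def)
  also have "\<dots> \<le> 1 + c"
    using \<open>0 \<le> c\<close> by (intro real_le_lsqrt) (simp_all add: power2_sum)
  finally show ?thesis unfolding flog_eq_sqrt_ln_max m_def M_def c_def .
qed

locale small_increment =
  fixes u q t :: real
  assumes t_pos: "0 < t" and t_le: "t \<le> 1/8"
    and q_nonneg: "0 \<le> q" and q_le: "q \<le> t^2"
    and u_sq_le: "u^2 \<le> q"
begin

lemma abs_u_le: "\<bar>u\<bar> \<le> t"
  using u_sq_le q_le t_pos abs_le_square_iff[of u t] by simp

lemma q_le_t: "q \<le> t/8"
proof -
  have "t^2 \<le> t/8" using mult_left_mono[OF t_le] t_pos by (simp add: power2_eq_square)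
  then show ?thesis using q_le by simp
qed

lemma q_sq_le: "q^2 \<le> q/64"
proof -
  have "q * q \<le> q * (1/64)"
    using q_nonneg q_le_t t_le by (intro mult_left_mono) auto
  then show ?thesis by (simp add: power2_eq_square)
qed

lemma abs_arg_le: "\<bar>2*u + q\<bar> \<le> 3*t"
  using abs_u_le q_le_t t_pos q_nonneg by auto

lemma arg_sq_le: "(2*u + q)^2 \<le> 9*q"
proof -
  have "(2*u + q)^2 + (2*u - q)^2 = 8*u^2 + 2*q^2" by (simp add: power2_eq_square algebra_simps)
  then show ?thesis using u_sq_le q_sq_le q_nonneg zero_le_power2[of "2*u - q"] by linarith
qed

lemma half_ln_le: "ln (1 + 2*u + q)/2 \<le> u + q/2 - u^2 + 6*(q*t)"
proof -
  define s where "s = 2*u + q"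
  have "s^3 = s * s^2" by (simp add: power3_eq_cube power2_eq_square)
  also have "\<dots> \<le> \<bar>s\<bar> * s^2" by (intro mult_right_mono) auto
  also have "\<dots> \<le> (3*t) * (9*q)"
    using abs_arg_le arg_sq_le t_pos unfolding s_def by (intro mult_mono) auto
  finally have s3: "s^3 \<le> 27*(q*t)" by (simp add: ac_simps)
  have "(-u)*q \<le> t*q" using abs_u_le q_nonneg by (intro mult_right_mono) auto
  then have "-(u*q) \<le> q*t" by (simp add: ac_simps)
  moreover have "s - s^2/2 = 2*u + q - 2*u^2 - 2*(u*q) - q^2/2"
    unfolding s_def by (simp add: power2_eq_square algebra_simps)
  moreover have "ln (1 + s) \<le> s - s^2/2 + s^3/3"
    using abs_arg_le t_le unfolding s_def by (intro ln_one_plus_le_cubic) auto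
  ultimately have "ln (1 + s)/2 \<le> u + q/2 - u^2 + 6*(q*t)"
    using s3 q_nonneg t_pos zero_le_power2[of q] mult_nonneg_nonneg[of q t] by linarith
  then show ?thesis unfolding s_def by (simp add: add.assoc)
qed

lemma half_ln_near_u: "\<bar>ln (1 + 2*u + q)/2 - u\<bar> \<le> 10*q"
proof -
  have "\<bar>ln (1 + (2*u + q)) - (2*u + q)\<bar> \<le> 2*(2*u + q)^2"
    using abs_arg_le t_le by (intro abs_ln_one_plus_x_minus_x_bound) auto
  then show ?thesis using arg_sq_le q_nonneg by (simp add: abs_le_iff add.assoc)
qed

lemma half_ln_sq_ge: "u^2 - 20*(q*t) \<le> (ln (1 + 2*u + q)/2)^2"
proof -
  define d where "d = ln (1 + 2*u + q)/2"
  have "\<bar>u*(d - u)\<bar> \<le> t*(10*q)"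
    unfolding abs_mult d_def using abs_u_le half_ln_near_u t_pos by (intro mult_mono) auto
  then have "-(10*(q*t)) \<le> u*(d - u)" by (simp add: abs_le_iff ac_simps)
  moreover have "d^2 = u^2 + 2*(u*(d - u)) + (d - u)^2" by (simp add: power2_eq_square algebra_simps)
  ultimately show ?thesis unfolding d_def[symmetric] using zero_le_power2[of "d - u"] by linarith
qed

lemma abs_half_ln_cube_le: "\<bar>ln (1 + 2*u + q)/2\<bar>^3 \<le> 18*(q*t)"
proof -
  define d where "d = ln (1 + 2*u + q)/2"
  have du: "\<bar>d - u\<bar> \<le> 10*q" unfolding d_def by (rule half_ln_near_u)
  have "(d - u)^2 \<le> (10*q)^2" using du q_nonneg abs_le_square_iff[of "d - u" "10*q"] by simp
  then have "(d - u)^2 \<le> 2*q" using q_sq_le q_nonneg by (simp add: power_mult_distrib)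
  moreover have "2*u^2 + 2*(d - u)^2 - d^2 = (d - 2*u)^2" by (simp add: power2_eq_square algebra_simps)
  ultimately have "d^2 \<le> 6*q" using u_sq_le zero_le_power2[of "d - 2*u"] by linarith
  moreover have "\<bar>d\<bar> \<le> 3*t" using du abs_u_le q_le_t t_pos by auto
  ultimately have "\<bar>d\<bar> * d^2 \<le> (3*t) * (6*q)" by (intro mult_mono) auto
  then show ?thesis unfolding d_def[symmetric] by (simp add: power3_eq_cube power2_eq_square ac_simps)
qed

lemma sqrt_half_ln_increment_le:
  assumes a: "a \<ge> 1"
  shows "sqrt (a^2 + ln (1 + 2*u + q)/2) - a
           \<le> 1/(2*a) * (u + q/2 - u^2 + 10*q*t) - 1/(8*a^3) * u^2 + 10*q*t/a^3"
proof -
  define d where "d = ln (1 + 2*u + q)/2"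
  have "\<bar>d\<bar> \<le> 3*t" using half_ln_near_u abs_u_le q_le_t t_pos unfolding d_def by auto
  moreover have "1 \<le> a^2" using a by (simp add: one_le_power)
  ultimately have "0 \<le> a^2 + d" using t_le by linarith
  then have "sqrt (a^2 + d) - a \<le> d/(2*a) - d^2/(8*a^3) + 3*\<bar>d\<bar>^3/(8*a^3)"
    by (rule sqrt_square_add_le[OF a])
  also have "\<dots> = d/(2*a) + (3*\<bar>d\<bar>^3 - d^2)/(8*a^3)" by (simp add: diff_divide_distrib)
  also have "\<dots> \<le> (u + q/2 - u^2 + 10*q*t)/(2*a) + (80*(q*t) - u^2)/(8*a^3)"
  proof (intro add_mono divide_right_mono)
    have "0 \<le> q*t" using q_nonneg t_pos by simp
    then have "6*(q*t) \<le> 10*q*t" by simp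
    then show "d \<le> u + q/2 - u^2 + 10*q*t" using half_ln_le unfolding d_def by linarith
    show "3*\<bar>d\<bar>^3 - d^2 \<le> 80*(q*t) - u^2"
      using half_ln_sq_ge abs_half_ln_cube_le \<open>0 \<le> q*t\<close> unfolding d_def by linarith
  qed (use a in auto)
  also have "\<dots> = 1/(2*a) * (u + q/2 - u^2 + 10*q*t) - 1/(8*a^3) * u^2 + 10*q*t/a^3"
    using a by (simp add: field_simps)
  finally show ?thesis unfolding d_def .
qed

end

lemma norm_add_sq_eq:
  fixes x y :: "'a::real_inner"
  assumes "x \<noteq> 0"
  shows "norm (x + y)^2 = norm x^2 * (1 + 2*((x \<bullet> y)/norm x^2) + norm y^2/norm x^2)"
  using assms
  by (simp add: power2_norm_eq_inner inner_add_left inner_add_right inner_commute field_simps)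

lemma inner_div_norm_sq_le:
  fixes x y :: "'a::real_inner"
  shows "((x \<bullet> y)/norm x^2)^2 \<le> norm y^2/norm x^2"
proof (cases "x = 0")
  case False
  have "((x \<bullet> y)/norm x^2)^2 = (x \<bullet> y)^2/(norm x^2)^2" by (simp add: power_divide)
  also have "\<dots> \<le> (norm x * norm y)^2/(norm x^2)^2"
    using power_mono[OF Cauchy_Schwarz_ineq2[of x y] abs_ge_zero, of 2] by (simp add: divide_right_mono)
  also have "\<dots> = norm y^2/norm x^2" using False by (simp add: power2_eq_square)
  finally show ?thesis .
qed simp

lemma flog_add_eq:
  fixes x y :: "real^2"
  assumes x: "1 \<le> norm x" and xy: "1 \<le> norm (x + y)"
  shows "flog (x + y) = sqrt (ln (norm x) + ln (1 + 2*((x \<bullet> y)/norm x^2) + norm y^2/norm x^2)/2)"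
proof -
  define w where "w = 1 + 2*((x \<bullet> y)/norm x^2) + norm y^2/norm x^2"
  have "x \<noteq> 0" using x by auto
  then have "norm (x + y)^2 = norm x^2 * w" unfolding w_def by (rule norm_add_sq_eq)
  moreover have "0 < norm (x + y)^2" using xy by (intro zero_less_power) linarith
  ultimately have "ln (norm (x + y)^2) = 2 * ln (norm x) + ln w"
    using x by (simp add: ln_mult ln_realpow zero_less_mult_iff)
  then have "ln (norm (x + y)) = ln (norm x) + ln w/2" using xy by (simp add: ln_realpow)
  then show ?thesis using xy by (simp add: flog_def w_def)
qed

lemma flog_add_sub_le_expansion:
  fixes x y :: "real^2" and \<epsilon> :: real
  assumes x: "exp 1 \<le> norm x" "8 \<le> norm x powr \<epsilon>" and y: "norm y \<le> norm x powr (1 - \<epsilon>)"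
  shows "flog (x + y) - flog x \<le>
           1 / (2 * sqrt (ln (norm x))) *
             ((x \<bullet> y) / norm x ^ 2 + norm y ^ 2 / (2 * norm x ^ 2)
              - (x \<bullet> y) ^ 2 / norm x ^ 4
              + 10 * norm y ^ 2 / norm x powr (2 + \<epsilon>))
           - 1 / (8 * ln (norm x) powr (3/2)) * ((x \<bullet> y) ^ 2 / norm x ^ 4)
           + 10 * norm y ^ 2 / (norm x powr (2 + \<epsilon>) * ln (norm x) powr (3/2))"
proof -
  define n where "n = norm x"
  define a where "a = sqrt (ln n)"
  define u where "u = (x \<bullet> y)/n^2"
  define q where "q = norm y^2/n^2"
  define t where "t = 1/n powr \<epsilon>"
  have n: "2 \<le> n" "1 \<le> ln n"
    using x(1) exp_ge_add_one_self[of 1] ln_mono[of "exp 1" n] by (auto simp: n_def)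
  have a: "1 \<le> a" "a^2 = ln n" using n by (simp_all add: a_def)
  have t: "0 < t" "t \<le> 1/8" using x(2) n by (auto simp: t_def n_def field_simps divide_le_eq_1)
  have "n powr (1 - \<epsilon>) = n * t" using n by (simp add: t_def powr_diff)
  then have y_le: "norm y \<le> n * t" using y by (simp add: n_def)
  interpret small_increment u q t
  proof
    have "norm y^2 \<le> (n * t)^2" using y_le by (intro power_mono) auto
    then show "q \<le> t^2" using n by (simp add: q_def field_simps power_mult_distrib)
    show "u^2 \<le> q" unfolding u_def q_def n_def by (rule inner_div_norm_sq_le)
  qed (use t in \<open>simp_all add: q_def\<close>)
  have "n - norm y \<le> norm (x + y)" using norm_diff_ineq[of x y] by (simp add: n_def)
  moreover have "n * t \<le> n/8" using n t by (simp add: mult_left_mono)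
  ultimately have xy: "1 \<le> norm (x + y)" using n y_le by linarith
  have fxy: "flog (x + y) = sqrt (a^2 + ln (1 + 2*u + q)/2)"
    using flog_add_eq[OF _ xy] n unfolding n_def[symmetric] by (simp add: a(2) u_def q_def)
  have fx: "flog x = a" using n by (simp add: flog_def a_def n_def)
  have "ln n powr (3/2) = (ln n powr (1/2))^3" using n by (simp add: powr_powr flip: powr_realpow)
  also have "\<dots> = a^3" using n by (simp add: a_def powr_half_sqrt)
  finally have ln_powr: "ln n powr (3/2) = a^3" .
  have n_powr: "n powr (2 + \<epsilon>) = n^2 / t" using n by (simp add: t_def powr_add powr_realpow)
  have q_half: "norm y^2/(2*n^2) = q/2" by (simp add: q_def)
  have u_sq: "(x \<bullet> y)^2/n^4 = u^2" by (simp add: u_def power_divide flip: power_mult)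
  have err: "10*norm y^2/n powr (2 + \<epsilon>) = 10*q*t"
    "10*norm y^2/(n powr (2 + \<epsilon>) * a^3) = 10*q*t/a^3"
    using n by (simp_all add: n_powr q_def)
  show ?thesis
    using sqrt_half_ln_increment_le[OF a(1)]
    unfolding n_def[symmetric] a_def[symmetric] ln_powr u_def[symmetric] q_half u_sq err fxy fx .
qed

theorem lemma2p2:
  shows "(\<forall>x y :: real^2. x \<noteq> 0 \<longrightarrow>
            flog (x + y) - flog x \<le> 1 + norm y / norm x)
       \<and> (\<forall>\<epsilon>::real. 0 < \<epsilon> \<and> \<epsilon> < 1 \<longrightarrow>
            (\<exists>r C :: real. r > 0 \<and> C > 0 \<and>
              (\<forall>x y :: real^2. norm x \<ge> r \<and> norm y \<le> norm x powr (1 - \<epsilon>) \<longrightarrow>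
                 flog (x + y) - flog x \<le>
                   1 / (2 * sqrt (ln (norm x))) *
                     ((x \<bullet> y) / norm x ^ 2 + norm y ^ 2 / (2 * norm x ^ 2)
                      - (x \<bullet> y) ^ 2 / norm x ^ 4
                      + C * norm y ^ 2 / norm x powr (2 + \<epsilon>))
                   - 1 / (8 * ln (norm x) powr (3/2)) * ((x \<bullet> y) ^ 2 / norm x ^ 4)
                   + C * norm y ^ 2 / (norm x powr (2 + \<epsilon>) * ln (norm x) powr (3/2)))))"
proof (intro conjI allI impI, goal_cases)
  case (1 x y)
  then show ?case by (rule flog_add_sub_le)
next
  case (2 \<epsilon>)
  define r where "r = max (exp 1) (8 powr (1/\<epsilon>))"
  have r8: "8 \<le> norm x powr \<epsilon>" if "r \<le> norm x" for x :: "real^2"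
  proof -
    have "8 = (8 powr (1/\<epsilon>)) powr \<epsilon>" using 2 by (simp add: powr_powr)
    also have "\<dots> \<le> norm x powr \<epsilon>" using that 2 by (intro powr_mono2) (auto simp: r_def)
    finally show ?thesis .
  qed
  have "exp 1 \<le> r" by (simp add: r_def)
  then have "0 < r" using exp_gt_zero[of 1] by linarith
  show ?case
    by (rule exI[of _ r], rule exI[of _ 10], intro conjI allI impI)
      ((use \<open>0 < r\<close> in simp), simp,
       use r8 \<open>exp 1 \<le> r\<close> in \<open>blast intro: flog_add_sub_le_expansion order_trans\<close>)
qed

end
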